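(* Let $\alpha \ge 0$, $\beta > 0$, $d_v > 0$, $\bar x \in \mathbb{R}$, $\bar y \in \mathbb{R}$ and $x_{\max} > 0$, and set $C = \bar y^2 + d_v^2$. For $\tilde x \in \mathbb{R}$ let $\delta = \bar x - \tilde x$ and $$g(\tilde x) = \beta(\delta^2 + C) + \ln(\delta^2 + C) + 2\alpha \tilde x .$$ If $\beta d_v^2 \ge 1$, then $g$ is a strictly convex function of $\tilde x$ on the interval $[0, x_{\max}]$.
   Context: This is the negative logarithm of the normalized average received SNR $e^{-\beta[(\tilde x-\bar x)^2+C]}/\big([(\tilde x-\bar x)^2+C]e^{2\alpha\tilde x}\big)$ of a single pinching antenna at position $(\tilde x,0,d_v)$ on a waveguide along the $x$-axis serving a user at $(\bar x,\bar y,0)$, where $\alpha$ is the in-waveguide attenuation coefficient and $\beta$ the LoS blockage parameter. The feasible set of antenna positions is $[0,x_{\max}]$. *)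

theory Defs
  imports "HOL-Analysis.Analysis"
begin

definition strictly_convex_on :: "real set \<Rightarrow> (real \<Rightarrow> real) \<Rightarrow> bool" where
  "strictly_convex_on S f \<longleftrightarrow> convex S \<and>
     (\<forall>x\<in>S. \<forall>y\<in>S. \<forall>u::real. x \<noteq> y \<and> 0 < u \<and> u < 1 \<longrightarrow>
        f (u * x + (1 - u) * y) < u * f x + (1 - u) * f y)"

end

theory Submission
  imports Defs
begin

text \<open>Split off half of the quadratic blockage term: \<open>\<beta>/2 \<delta>\<^sup>2\<close> is strictly convex, and the rest,
  \<open>\<beta>/2 \<delta>\<^sup>2 + ln (\<delta>\<^sup>2 + C)\<close>, has second derivative \<open>\<beta> + 2 (C - \<delta>\<^sup>2) / (\<delta>\<^sup>2 + C)\<^sup>2\<close>, which is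
  nonnegative as soon as \<open>\<beta> C \<ge> 1\<close>: bounding \<open>\<beta>\<close> below by \<open>1/C\<close> turns it into
  \<open>(\<delta>\<^sup>4 + 3 C\<^sup>2) / (C (\<delta>\<^sup>2 + C)\<^sup>2)\<close>. Since \<open>C \<ge> d\<^sub>v\<^sup>2\<close>, the hypothesis \<open>\<beta> d\<^sub>v\<^sup>2 \<ge> 1\<close> suffices.\<close>

lemma strictly_convex_on_add_convex:
  assumes "convex_on S f" and "strictly_convex_on S g"
  shows "strictly_convex_on S (\<lambda>x. f x + g x)"
  unfolding strictly_convex_on_def
proof (intro conjI ballI allI impI)
  show "convex S"
    using assms(2) by (simp add: strictly_convex_on_def)
  fix x y u :: real
  assume xy: "x \<in> S" "y \<in> S" and u: "x \<noteq> y \<and> 0 < u \<and> u < 1"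
  have "f (u * x + (1 - u) * y) \<le> u * f x + (1 - u) * f y"
    using convex_onD[OF assms(1), of "1 - u" x y] xy u by simp
  moreover have "g (u * x + (1 - u) * y) < u * g x + (1 - u) * g y"
    using assms(2) xy u by (simp add: strictly_convex_on_def)
  ultimately show "f (u * x + (1 - u) * y) + g (u * x + (1 - u) * y)
      < u * (f x + g x) + (1 - u) * (f y + g y)"
    by (simp add: algebra_simps)
qed

lemma strictly_convex_on_quadratic:
  fixes a b c :: real
  assumes "convex S" and "c > 0"
  shows "strictly_convex_on S (\<lambda>x. c * (a - x)\<^sup>2 + b)"
  unfolding strictly_convex_on_def
proof (intro conjI ballI allI impI)
  fix x y u :: real
  assume u: "x \<noteq> y \<and> 0 < u \<and> u < 1"
  have gap: "u * (c * (a - x)\<^sup>2 + b) + (1 - u) * (c * (a - y)\<^sup>2 + b)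
      - (c * (a - (u * x + (1 - u) * y))\<^sup>2 + b) = c * u * (1 - u) * (x - y)\<^sup>2"
    by (simp add: field_simps power2_eq_square)
  have "c * u * (1 - u) * (x - y)\<^sup>2 > 0"
    using u assms(2) by simp
  with gap show "c * (a - (u * x + (1 - u) * y))\<^sup>2 + b
      < u * (c * (a - x)\<^sup>2 + b) + (1 - u) * (c * (a - y)\<^sup>2 + b)"
    by linarith
qed (use assms(1) in simp)

lemma quadratic_ln_second_derivative_nonneg:
  fixes \<beta> C t :: real
  assumes "C > 0" and "\<beta> * C \<ge> 1" and "t \<ge> 0"
  shows "0 \<le> \<beta> + 2 * (C - t) / (t + C)\<^sup>2"
proof -
  have tC: "(t + C)\<^sup>2 > 0"
    using assms by simp
  have "\<beta> \<ge> 1 / C"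
    using assms(1,2) by (simp add: field_simps)
  then have "\<beta> + 2 * (C - t) / (t + C)\<^sup>2 \<ge> 1 / C + 2 * (C - t) / (t + C)\<^sup>2"
    by simp
  also have "1 / C + 2 * (C - t) / (t + C)\<^sup>2 = (t\<^sup>2 + 3 * C\<^sup>2) / (C * (t + C)\<^sup>2)"
    using assms(1) tC by (simp add: field_simps power2_eq_square)
  also have "\<dots> \<ge> 0"
    using assms(1) by simp
  finally show ?thesis .
qed

lemma convex_on_quadratic_plus_ln:
  fixes \<beta> C a :: real
  assumes "C > 0" and "\<beta> * C \<ge> 1"
  shows "convex_on UNIV (\<lambda>x. \<beta> / 2 * (a - x)\<^sup>2 + ln ((a - x)\<^sup>2 + C))"
proof (rule f''_ge0_imp_convex)
  fix x :: real
  have pos: "(a - x)\<^sup>2 + C > 0"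
    using assms(1) by (simp add: add_nonneg_pos)
  show "((\<lambda>x. \<beta> / 2 * (a - x)\<^sup>2 + ln ((a - x)\<^sup>2 + C)) has_real_derivative
      - \<beta> * (a - x) - 2 * (a - x) / ((a - x)\<^sup>2 + C)) (at x)"
    using pos by (auto intro!: derivative_eq_intros simp: field_simps power2_eq_square)
  show "((\<lambda>x. - \<beta> * (a - x) - 2 * (a - x) / ((a - x)\<^sup>2 + C)) has_real_derivative
      \<beta> + 2 * (C - (a - x)\<^sup>2) / ((a - x)\<^sup>2 + C)\<^sup>2) (at x)"
    using pos
    by (auto intro!: derivative_eq_intros) (simp_all add: divide_simps algebra_simps power2_eq_square)
  show "0 \<le> \<beta> + 2 * (C - (a - x)\<^sup>2) / ((a - x)\<^sup>2 + C)\<^sup>2"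
    using quadratic_ln_second_derivative_nonneg[OF assms] by simp
qed simp

theorem lemma1:
  fixes \<alpha> \<beta> d\<^sub>v xbar ybar xmax :: real
  assumes "\<alpha> \<ge> 0" and "\<beta> > 0" and "d\<^sub>v > 0" and "xmax > 0"
    and "\<beta> * d\<^sub>v ^ 2 \<ge> 1"
  shows "strictly_convex_on {0..xmax}
           (\<lambda>xt. let C = ybar ^ 2 + d\<^sub>v ^ 2; \<delta> = xbar - xt in
                  \<beta> * (\<delta> ^ 2 + C) + ln (\<delta> ^ 2 + C) + 2 * \<alpha> * xt)"
proof -
  define C where "C = ybar\<^sup>2 + d\<^sub>v\<^sup>2"
  have "C > 0"
    unfolding C_def using assms(3) by (simp add: add_nonneg_pos)
  moreover have "\<beta> * C \<ge> 1"
  proof -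
    have "\<beta> * d\<^sub>v\<^sup>2 \<le> \<beta> * C"
      unfolding C_def using assms(2) by simp
    with assms(5) show ?thesis by simp
  qed
  ultimately have "convex_on {0..xmax} (\<lambda>x. \<beta> / 2 * (xbar - x)\<^sup>2 + ln ((xbar - x)\<^sup>2 + C))"
    by (rule convex_on_subset[OF convex_on_quadratic_plus_ln]) auto
  moreover have "convex_on {0..xmax} (\<lambda>x. 2 * \<alpha> * x)"
    using assms(1) by (intro convex_on_cmul) (auto simp: convex_on_ident)
  ultimately have "convex_on {0..xmax}
      (\<lambda>x. (\<beta> / 2 * (xbar - x)\<^sup>2 + ln ((xbar - x)\<^sup>2 + C)) + 2 * \<alpha> * x)"
    by (rule convex_on_add)
  moreover have "strictly_convex_on {0..xmax} (\<lambda>x. \<beta> / 2 * (xbar - x)\<^sup>2 + \<beta> * C)"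
    using assms(2) by (intro strictly_convex_on_quadratic) auto
  ultimately have "strictly_convex_on {0..xmax} (\<lambda>x.
      (\<beta> / 2 * (xbar - x)\<^sup>2 + ln ((xbar - x)\<^sup>2 + C) + 2 * \<alpha> * x) + (\<beta> / 2 * (xbar - x)\<^sup>2 + \<beta> * C))"
    by (rule strictly_convex_on_add_convex)
  then show ?thesis
    by (simp add: C_def Let_def algebra_simps)
qed

end
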